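(* Let $\alpha_{\mathrm{model}}$ be the hybrid program defined in the context. Then the following two differential dynamic logic formulas are valid, i.e. true in every state (every assignment of real values to all variables and constants): $$\mathrm{Ctx}\ \wedge\ x_e + L \le x_o\ \wedge\ D_e(B_{\min}) + L < D_o\ \wedge\ t_c = t - T\ \ \rightarrow\ \ [\alpha_{\mathrm{model}}]\,\big(x_e + L \le x_o\big),$$ $$\mathrm{Ctx}\ \wedge\ x_o + L \le x_e\ \wedge\ \hat D_o + L < \hat D_e(A_{\min})\ \wedge\ t_c = t - T\ \ \rightarrow\ \ [\alpha_{\mathrm{model}}]\,\big(x_o + L \le x_e\big).$$ That is, from every state satisfying the respective premise, every final state of every run of $\alpha_{\mathrm{model}}$ satisfies the respective distance condition.
   Context: Hybrid programs and their semantics (differential dynamic logic). A state assigns a real number to every variable. Programs denote transition relations on states: $?\varphi$ stays in the current state if $\varphi$ holds there and has no transition otherwise; $x := e$ sets $x$ to the value of term $e$; $x := *$ sets $x$ to an arbitrary real; $\{x_1'=e_1,\dots,x_n'=e_n \,\&\, \psi\}$ follows the solution of the ODE system for any duration $r\ge 0$ (including $0$) such that $\psi$ holds throughout $[0,r]$, other variables unchanged; $\alpha\cup\beta$ is nondeterministic choice; $\alpha;\beta$ is sequential composition; $\alpha^*$ repeats $\alpha$ any finite number $\ge 0$ of times. $\mathtt{if}(\varphi)\,\alpha$ abbreviates $(?\varphi;\alpha)\cup ?\neg\varphi$, and $\mathtt{if}(\varphi)\,\alpha\ \mathtt{else}\ \beta$ abbreviates $(?\varphi;\alpha)\cup(?\neg\varphi;\beta)$.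 $[\alpha]\phi$ holds in state $\omega$ iff $\phi$ holds in every state reachable from $\omega$ by $\alpha$. Variables: ego car position $x_e$, velocity $v_e$, acceleration $a_e$; other car position $x_o$, velocity $v_o$, acceleration $a_o$; time $t$; clock $t_c$. Constants (not changed by programs): $T, L, V, A_{\min}, A_{\max}, B_{\min}, B_{\max}$. $\mathrm{Ctx} \equiv T>0 \wedge L>0 \wedge V>0 \wedge B_{\max}\le B_{\min}<0<A_{\min}\le A_{\max} \wedge B_{\max}\le a_e\le A_{\max}\wedge B_{\max}\le a_o\le A_{\max} \wedge 0\le v_e\le V \wedge 0\le v_o\le V$. Abbreviations: $D_e(a) = x_e - \frac{v_e^2}{2a}$, $D_o = x_o - \frac{v_o^2}{2B_{\max}}$; $\hat v_i = v_i - V$, $\hat x_i = x_i - V t$ for $i\in\{e,o\}$, $\hat D_e(a) = \hat x_e - \frac{\hat v_e^2}{2a}$, $\hat D_o = \hat x_o - \frac{\hat v_o^2}{2A_{\max}}$. $\mathrm{safeBack} \equiv x_e + L \le x_o \wedge \big( (a_e \le B_{\min} \wedge D_e(B_{\min}) + L < D_o) \vee (B_{\min}\le a_e \wedge v_e + a_e T < 0 \wedge D_e(a_e)+L<D_o) \vee (B_{\min}\le a_e \wedge v_e + a_e T\ge 0 \wedge D_e(B_{\min}) + (\tfrac{-a_e}{B_{\min}}+1)(\tfrac{a_e}{2}T^2 + T v_e) + L < D_o)\big)$. $\mathrm{safeFront} \equiv x_o + L \le x_e \wedge \big( (A_{\min}\le a_e \wedge \hat D_o + L < \hat D_e(A_{\min}))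 \vee (a_e \le A_{\min}\wedge \hat v_e + a_e T > 0 \wedge \hat D_o + L < \hat D_e(a_e)) \vee (a_e\le A_{\min} \wedge \hat v_e + a_e T \le 0 \wedge \hat D_o + L < \hat D_e(A_{\min}) + (\tfrac{-a_e}{A_{\min}}+1)(\tfrac{a_e}{2}T^2 + \hat v_e T))\big)$. Programs: $\mathrm{ctrl}_o \equiv a_o := *;\ ?(B_{\max}\le a_o\le A_{\max})$. $\mathrm{ctrl}_T \equiv a_e := *;\ ?(B_{\max}\le a_e\le A_{\max});\ t_c := t;\ \mathtt{if}(\neg(\mathrm{safeBack}\vee\mathrm{safeFront}))\ \{\mathtt{if}(x_e\le x_o)\ \{a_e:=*;\ ?(B_{\max}\le a_e\le B_{\min})\}\ \mathtt{else}\ \{a_e:=*;\ ?(A_{\min}\le a_e\le A_{\max})\}\}$. $\mathrm{accCor} \equiv \mathtt{if}((v_o=0\wedge a_o<0)\vee(v_o=V\wedge a_o>0))\ a_o:=0;\ \mathtt{if}((v_e=0\wedge a_e<0)\vee(v_e=V\wedge a_e>0))\ a_e:=0$. $\mathrm{plant} \equiv \{x_e'=v_e, v_e'=a_e, x_o'=v_o, v_o'=a_o, t'=1 \ \&\ t\le t_c+T \wedge 0\le v_e\le V\wedge 0\le v_o\le V\}$. $\alpha_{\mathrm{model}} \equiv \big(\mathrm{ctrl}_o;\ (\mathrm{ctrl}_T \cup ?(t<t_c+T));\ \mathrm{accCor};\ \mathrm{plant}\big)^*$. *)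

theory Defs
  imports "HOL-Analysis.Analysis"
begin

text \<open>States: values of the program variables. Constants are kept in a separate
  record since no program changes them.\<close>

record st =
  xe :: real
  ve :: real
  ae :: real
  xo :: real
  vo :: real
  ao :: real
  t  :: real
  tc :: real

record prm =
  cT :: real
  cL :: real
  cV :: real
  cAmin :: real
  cAmax :: real
  cBmin :: real
  cBmax :: real

type_synonym prog = "st \<Rightarrow> st \<Rightarrow> bool"

definition Test :: "(st \<Rightarrow> bool) \<Rightarrow> prog" where
  "Test P = (\<lambda>s s'. s' = s \<and> P s)"

definition Seq :: "prog \<Rightarrow> prog \<Rightarrow> prog" where
  "Seq a b = a OO b"

definition Choice :: "prog \<Rightarrow> prog \<Rightarrow> prog" where
  "Choice a b = (\<lambda>s s'. a s s' \<or> b s s')"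

definition Star :: "prog \<Rightarrow> prog" where
  "Star a = a\<^sup>*\<^sup>*"

definition IfP :: "(st \<Rightarrow> bool) \<Rightarrow> prog \<Rightarrow> prog" where
  "IfP P a = Choice (Seq (Test P) a) (Test (\<lambda>s. \<not> P s))"

definition IfElse :: "(st \<Rightarrow> bool) \<Rightarrow> prog \<Rightarrow> prog \<Rightarrow> prog" where
  "IfElse P a b = Choice (Seq (Test P) a) (Seq (Test (\<lambda>s. \<not> P s)) b)"

text \<open>Assignment x := e and nondeterministic assignment x := *, for a variable
  given by its record update function.\<close>

definition Asg :: "((real \<Rightarrow> real) \<Rightarrow> st \<Rightarrow> st) \<Rightarrow> (st \<Rightarrow> real) \<Rightarrow> prog" where
  "Asg upd e = (\<lambda>s s'. s' = upd (\<lambda>_. e s) s)"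

definition Rnd :: "((real \<Rightarrow> real) \<Rightarrow> st \<Rightarrow> st) \<Rightarrow> prog" where
  "Rnd upd = (\<lambda>s s'. \<exists>r. s' = upd (\<lambda>_. r) s)"

definition Box :: "prog \<Rightarrow> (st \<Rightarrow> bool) \<Rightarrow> st \<Rightarrow> bool" where
  "Box a \<phi> s = (\<forall>s'. a s s' \<longrightarrow> \<phi> s')"

definition Ctx :: "prm \<Rightarrow> st \<Rightarrow> bool" where
  "Ctx p s = (cT p > 0 \<and> cL p > 0 \<and> cV p > 0 \<and>
     cBmax p \<le> cBmin p \<and> cBmin p < 0 \<and> 0 < cAmin p \<and> cAmin p \<le> cAmax p \<and>
     cBmax p \<le> ae s \<and> ae s \<le> cAmax p \<and> cBmax p \<le> ao s \<and> ao s \<le> cAmax p \<and>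
     0 \<le> ve s \<and> ve s \<le> cV p \<and> 0 \<le> vo s \<and> vo s \<le> cV p)"

definition De :: "real \<Rightarrow> st \<Rightarrow> real" where
  "De a s = xe s - (ve s)\<^sup>2 / (2 * a)"

definition Do :: "prm \<Rightarrow> st \<Rightarrow> real" where
  "Do p s = xo s - (vo s)\<^sup>2 / (2 * cBmax p)"

definition hve :: "prm \<Rightarrow> st \<Rightarrow> real" where "hve p s = ve s - cV p"
definition hvo :: "prm \<Rightarrow> st \<Rightarrow> real" where "hvo p s = vo s - cV p"
definition hxe :: "prm \<Rightarrow> st \<Rightarrow> real" where "hxe p s = xe s - cV p * t s"
definition hxo :: "prm \<Rightarrow> st \<Rightarrow> real" where "hxo p s = xo s - cV p * t s"

definition hDe :: "prm \<Rightarrow> real \<Rightarrow> st \<Rightarrow> real" where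
  "hDe p a s = hxe p s - (hve p s)\<^sup>2 / (2 * a)"

definition hDo :: "prm \<Rightarrow> st \<Rightarrow> real" where
  "hDo p s = hxo p s - (hvo p s)\<^sup>2 / (2 * cAmax p)"

definition safeBack :: "prm \<Rightarrow> st \<Rightarrow> bool" where
  "safeBack p s = (xe s + cL p \<le> xo s \<and>
     ((ae s \<le> cBmin p \<and> De (cBmin p) s + cL p < Do p s) \<or>
      (cBmin p \<le> ae s \<and> ve s + ae s * cT p < 0 \<and> De (ae s) s + cL p < Do p s) \<or>
      (cBmin p \<le> ae s \<and> ve s + ae s * cT p \<ge> 0 \<and>
        De (cBmin p) s + (- ae s / cBmin p + 1) * (ae s / 2 * (cT p)\<^sup>2 + cT p * ve s) + cL p
          < Do p s)))"

definition safeFront :: "prm \<Rightarrow> st \<Rightarrow> bool" where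
  "safeFront p s = (xo s + cL p \<le> xe s \<and>
     ((cAmin p \<le> ae s \<and> hDo p s + cL p < hDe p (cAmin p) s) \<or>
      (ae s \<le> cAmin p \<and> hve p s + ae s * cT p > 0 \<and> hDo p s + cL p < hDe p (ae s) s) \<or>
      (ae s \<le> cAmin p \<and> hve p s + ae s * cT p \<le> 0 \<and>
        hDo p s + cL p < hDe p (cAmin p) s
          + (- ae s / cAmin p + 1) * (ae s / 2 * (cT p)\<^sup>2 + hve p s * cT p))))"

definition ctrl_o :: "prm \<Rightarrow> prog" where
  "ctrl_o p = Seq (Rnd ao_update) (Test (\<lambda>s. cBmax p \<le> ao s \<and> ao s \<le> cAmax p))"

definition ctrl_T :: "prm \<Rightarrow> prog" where
  "ctrl_T p =
     Seq (Rnd ae_update)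
    (Seq (Test (\<lambda>s. cBmax p \<le> ae s \<and> ae s \<le> cAmax p))
    (Seq (Asg tc_update t)
         (IfP (\<lambda>s. \<not> (safeBack p s \<or> safeFront p s))
            (IfElse (\<lambda>s. xe s \<le> xo s)
               (Seq (Rnd ae_update) (Test (\<lambda>s. cBmax p \<le> ae s \<and> ae s \<le> cBmin p)))
               (Seq (Rnd ae_update) (Test (\<lambda>s. cAmin p \<le> ae s \<and> ae s \<le> cAmax p)))))))"

definition accCor :: "prm \<Rightarrow> prog" where
  "accCor p =
     Seq (IfP (\<lambda>s. (vo s = 0 \<and> ao s < 0) \<or> (vo s = cV p \<and> ao s > 0)) (Asg ao_update (\<lambda>_. 0)))
         (IfP (\<lambda>s. (ve s = 0 \<and> ae s < 0) \<or> (ve s = cV p \<and> ae s > 0)) (Asg ae_update (\<lambda>_. 0)))"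

text \<open>Continuous evolution along
  {xe'=ve, ve'=ae, xo'=vo, vo'=ao, t'=1 & t <= tc+T /\ 0<=ve<=V /\ 0<=vo<=V}:
  some duration r >= 0 and a solution on [0,r] starting in s, with the evolution
  domain holding throughout [0,r]; ae, ao, tc are unchanged.\<close>

definition plant :: "prm \<Rightarrow> prog" where
  "plant p s s' = (\<exists>r::real. r \<ge> 0 \<and>
     (\<exists>X VE XO VO TM :: real \<Rightarrow> real.
        X 0 = xe s \<and> VE 0 = ve s \<and> XO 0 = xo s \<and> VO 0 = vo s \<and> TM 0 = t s \<and>
        (\<forall>\<tau>\<in>{0..r}.
           (X has_real_derivative VE \<tau>) (at \<tau> within {0..r}) \<and>
           (VE has_real_derivative ae s) (at \<tau> within {0..r}) \<and>
           (XO has_real_derivative VO \<tau>) (at \<tau> within {0..r}) \<and>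
           (VO has_real_derivative ao s) (at \<tau> within {0..r}) \<and>
           (TM has_real_derivative 1) (at \<tau> within {0..r}) \<and>
           TM \<tau> \<le> tc s + cT p \<and> 0 \<le> VE \<tau> \<and> VE \<tau> \<le> cV p \<and> 0 \<le> VO \<tau> \<and> VO \<tau> \<le> cV p) \<and>
        s' = s\<lparr>xe := X r, ve := VE r, xo := XO r, vo := VO r, t := TM r\<rparr>))"

definition model :: "prm \<Rightarrow> prog" where
  "model p = Star
     (Seq (ctrl_o p)
     (Seq (Choice (ctrl_T p) (Test (\<lambda>s. t s < tc s + cT p)))
     (Seq (accCor p) (plant p))))"

end

theory Submission
  imports Defs
begin

text \<open>
  Behind the other car, the invariant is: the gap is at least L, and the worst-case stopping
  point of the ego car -- keep the current acceleration until the next control decision at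
  tc + T (or until standing still), then brake with B_min -- lies more than L behind the point
  where the other car stops when braking with B_max. A control decision either starts a new
  period for which safeBack holds or brakes at least with B_min; the velocity corrections only
  move the ego car's stopping point back; and along the flow the ego car's worst-case stopping
  point does not move forward while the other car's one does not move back. The gap cannot shrink below L
  during the flow: whenever the ego car is at least as fast as the other car, the invariant at
  that instant forces the gap to exceed L, and elsewhere the gap grows.

  The front case is the back case in the coordinates x \<mapsto> V t - x, v \<mapsto> V - v of a reference
  car driving backwards at full speed: braking and accelerating exchange their roles, and the
  hatted quantities become negated stopping points.
\<close>

section \<open>Stopping points\<close>

definition stop_pos :: "real \<Rightarrow> real \<Rightarrow> real \<Rightarrow> real" where
  "stop_pos b x v = x - v\<^sup>2 / (2 * b)"

lemma stop_pos_mono: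
  assumes "b < 0" "x \<le> x'" "0 \<le> v" "v \<le> v'"
  shows "stop_pos b x v \<le> stop_pos b x' v'"
proof -
  have "v\<^sup>2 / (- 2 * b) \<le> v'\<^sup>2 / (- 2 * b)"
    using assms by (intro divide_right_mono power_mono) auto
  with assms(2) show ?thesis
    by (simp add: stop_pos_def)
qed

lemma stop_pos_mono_decel:
  assumes "b \<le> a" "a < 0"
  shows "stop_pos b x v \<le> stop_pos a x v"
proof -
  have "v\<^sup>2 / (- 2 * b) \<le> v\<^sup>2 / (- 2 * a)"
    using assms by (intro divide_left_mono) (auto simp: mult_neg_neg)
  then show ?thesis
    by (simp add: stop_pos_def)
qed

lemma stop_pos_flow:
  assumes "b \<noteq> 0"
  shows "stop_pos b (x + v * \<tau> + a * \<tau>\<^sup>2 / 2) (v + a * \<tau>)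
    = stop_pos b x v + (v * \<tau> + a * \<tau>\<^sup>2 / 2) * (1 - a / b)"
  using assms by (simp add: stop_pos_def field_simps power2_eq_square)

lemma distance_travelled_nonneg:
  fixes v a \<tau> :: real
  assumes "0 \<le> \<tau>" "0 \<le> v" "0 \<le> v + a * \<tau>"
  shows "0 \<le> v * \<tau> + a * \<tau>\<^sup>2 / 2"
proof -
  have "v * \<tau> + a * \<tau>\<^sup>2 / 2 = \<tau> * ((v + (v + a * \<tau>)) / 2)"
    by (simp add: algebra_simps power2_eq_square)
  also have "\<dots> \<ge> 0"
    using assms by simp
  finally show ?thesis .
qed

lemma stop_pos_le_flow:
  assumes "b < 0" "b \<le> a" "0 \<le> \<tau>" "0 \<le> v" "0 \<le> v + a * \<tau>"
  shows "stop_pos b x v \<le> stop_pos b (x + v * \<tau> + a * \<tau>\<^sup>2 / 2) (v + a * \<tau>)"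
proof -
  have "0 \<le> 1 - a / b"
    using assms by (simp add: divide_simps)
  with distance_travelled_nonneg[OF assms(3-5)] stop_pos_flow[of b] assms(1) show ?thesis
    by simp
qed

lemma stop_pos_flow_le:
  assumes "b < 0" "a \<le> b" "0 \<le> \<tau>" "0 \<le> v" "0 \<le> v + a * \<tau>"
  shows "stop_pos b (x + v * \<tau> + a * \<tau>\<^sup>2 / 2) (v + a * \<tau>) \<le> stop_pos b x v"
proof -
  have "1 - a / b \<le> 0"
    using assms by (simp add: divide_simps)
  with distance_travelled_nonneg[OF assms(3-5)] stop_pos_flow[of b] assms(1) show ?thesis
    by (simp add: mult_nonneg_nonpos)
qed

lemma pos_less_if_stop_pos_less:
  assumes "B \<le> b" "b < 0" "0 \<le> vl" "vl \<le> vf"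
    and "stop_pos b xf vf + L < stop_pos B xl vl"
  shows "xf + L < xl"
proof -
  have "stop_pos B xl vl \<le> stop_pos B xl vf"
    using assms by (intro stop_pos_mono) auto
  also have "\<dots> \<le> stop_pos b xl vf"
    using assms by (intro stop_pos_mono_decel)
  finally show ?thesis
    using assms(5) by (simp add: stop_pos_def)
qed

section \<open>Safe following distance\<close>

text \<open>The follower keeps acceleration af for the remaining time r (unless it comes to a
  standstill earlier: second case), then brakes with b; the leader brakes with B at once.
  For r = T these are the three cases of safeBack.\<close>

definition follow_safe :: "real \<Rightarrow> real \<Rightarrow> real \<Rightarrow> real \<Rightarrow> real \<Rightarrow> real \<Rightarrow> real \<Rightarrow> real \<Rightarrow> real \<Rightarrow> bool"
  where "follow_safe b B L r xf vf af xl vl \<longleftrightarrow>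
    (af \<le> b \<and> stop_pos b xf vf + L < stop_pos B xl vl) \<or>
    (b \<le> af \<and> vf + af * r < 0 \<and> stop_pos af xf vf + L < stop_pos B xl vl) \<or>
    (b \<le> af \<and> 0 \<le> vf + af * r \<and>
      stop_pos b (xf + vf * r + af * r\<^sup>2 / 2) (vf + af * r) + L < stop_pos B xl vl)"

lemma follow_safe_stop_pos:
  assumes "b < 0" "0 \<le> r" "0 \<le> vf" "follow_safe b B L r xf vf af xl vl"
  shows "stop_pos b xf vf + L < stop_pos B xl vl"
  using assms(4) unfolding follow_safe_def
proof (elim disjE conjE)
  assume "b \<le> af" "vf + af * r < 0" "stop_pos af xf vf + L < stop_pos B xl vl"
  moreover from this assms(2,3) have "af < 0"
    by (smt (verit) mult_nonneg_nonneg)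
  ultimately show ?thesis
    using stop_pos_mono_decel[of b af xf vf] by linarith
next
  assume "b \<le> af" "0 \<le> vf + af * r"
    "stop_pos b (xf + vf * r + af * r\<^sup>2 / 2) (vf + af * r) + L < stop_pos B xl vl"
  with stop_pos_le_flow[of b af r vf xf] assms(1-3) show ?thesis
    by linarith
qed

lemma follow_safe_flow:
  assumes "b < 0" "B < 0" "B \<le> al" "0 \<le> \<tau>"
    and "0 \<le> vf" "0 \<le> vf + af * \<tau>" "0 \<le> vl" "0 \<le> vl + al * \<tau>"
    and "follow_safe b B L r xf vf af xl vl"
  shows "follow_safe b B L (r - \<tau>) (xf + vf * \<tau> + af * \<tau>\<^sup>2 / 2) (vf + af * \<tau>) af
    (xl + vl * \<tau> + al * \<tau>\<^sup>2 / 2) (vl + al * \<tau>)"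
proof -
  have leader: "stop_pos B xl vl \<le> stop_pos B (xl + vl * \<tau> + al * \<tau>\<^sup>2 / 2) (vl + al * \<tau>)"
    using assms by (intro stop_pos_le_flow)
  have speed: "vf + af * \<tau> + af * (r - \<tau>) = vf + af * r"
    by (simp add: algebra_simps)
  have position: "xf + vf * \<tau> + af * \<tau>\<^sup>2 / 2 + (vf + af * \<tau>) * (r - \<tau>) + af * (r - \<tau>)\<^sup>2 / 2
      = xf + vf * r + af * r\<^sup>2 / 2"
    by (simp add: field_simps power2_eq_square)
  from assms(9) show ?thesis
    unfolding follow_safe_def[of b B L r]
  proof (elim disjE conjE)
    assume "af \<le> b" "stop_pos b xf vf + L < stop_pos B xl vl"
    with stop_pos_flow_le[of b af \<tau> vf xf] assms(1,4-6) leader show ?thesis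
      by (auto simp: follow_safe_def)
  next
    assume stops: "b \<le> af" "vf + af * r < 0" "stop_pos af xf vf + L < stop_pos B xl vl"
    moreover from stops assms(5) have "af \<noteq> 0"
      by auto
    ultimately show ?thesis
      using stop_pos_flow[of af xf vf \<tau> af] leader speed by (auto simp: follow_safe_def)
  next
    assume "b \<le> af" "0 \<le> vf + af * r"
      "stop_pos b (xf + vf * r + af * r\<^sup>2 / 2) (vf + af * r) + L < stop_pos B xl vl"
    with leader show ?thesis
      unfolding follow_safe_def position speed by auto
  qed
qed

lemma follow_safe_zero_acc:
  assumes "b < 0" "0 \<le> r" "0 \<le> vf" "follow_safe b B L r xf vf af xl vl" "vf = 0 \<or> 0 \<le> af"
  shows "follow_safe b B L r xf vf 0 xl vl"
  using assms(5)
proof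
  assume "vf = 0"
  with follow_safe_stop_pos[OF assms(1-4)] assms(1) show ?thesis
    by (simp add: follow_safe_def stop_pos_def)
next
  assume "0 \<le> af"
  with assms have "stop_pos b (xf + vf * r + af * r\<^sup>2 / 2) (vf + af * r) + L < stop_pos B xl vl"
    unfolding follow_safe_def by (smt (verit) mult_nonneg_nonneg)
  moreover have "stop_pos b (xf + vf * r) vf \<le> stop_pos b (xf + vf * r + af * r\<^sup>2 / 2) (vf + af * r)"
    using assms \<open>0 \<le> af\<close> by (intro stop_pos_mono) auto
  ultimately show ?thesis
    using assms(1,3) by (simp add: follow_safe_def)
qed

lemma quadratic_nonneg_at_end:
  fixes g w k d :: real
  assumes "0 \<le> d" "0 \<le> g"
    and nonincr: "\<And>\<tau>. 0 \<le> \<tau> \<Longrightarrow> \<tau> \<le> d \<Longrightarrow> w + k * \<tau> \<le> 0 \<Longrightarrow> 0 \<le> g + w * \<tau> + k * \<tau>\<^sup>2 / 2"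
  shows "0 \<le> g + w * d + k * d\<^sup>2 / 2"
proof (cases "w + k * d \<le> 0")
  case True
  with nonincr assms(1) show ?thesis
    by simp
next
  case False
  have increment: "g + w * d + k * d\<^sup>2 / 2
      = (g + w * \<tau> + k * \<tau>\<^sup>2 / 2) + (d - \<tau>) * (((w + k * \<tau>) + (w + k * d)) / 2)" for \<tau>
    by (simp add: field_simps power2_eq_square)
  \<comment> \<open>from the last instant with nonpositive slope (or from 0) on, the slope is nonnegative\<close>
  obtain \<tau> where "0 \<le> \<tau>" "\<tau> \<le> d" "0 \<le> w + k * \<tau>" "0 \<le> g + w * \<tau> + k * \<tau>\<^sup>2 / 2"
  proof (cases "0 \<le> w")
    case True
    with that[of 0] assms(1,2) show ?thesis
      by simp
  next
    case False
    with \<open>\<not> w + k * d \<le> 0\<close> have "0 < k * d"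
      by linarith
    then have "0 < k"
      using assms(1) by (simp add: zero_less_mult_iff)
    define \<tau>\<^sub>0 where "\<tau>\<^sub>0 = - w / k"
    have "w + k * \<tau>\<^sub>0 = 0" "0 \<le> \<tau>\<^sub>0" "\<tau>\<^sub>0 \<le> d"
      using \<open>0 < k\<close> False \<open>\<not> w + k * d \<le> 0\<close> by (simp_all add: \<tau>\<^sub>0_def field_simps)
    with that nonincr[of \<tau>\<^sub>0] show ?thesis
      by simp
  qed
  moreover have "0 \<le> (d - \<tau>) * (((w + k * \<tau>) + (w + k * d)) / 2)"
    using calculation False by (intro mult_nonneg_nonneg) auto
  ultimately show ?thesis
    using increment[of \<tau>] by linarith
qed

lemma follow_safe_keeps_gap:
  assumes "B \<le> b" "b < 0" "B \<le> al" "0 \<le> d" "d \<le> r"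
    and speeds: "\<forall>\<tau>\<in>{0..d}. 0 \<le> vf + af * \<tau> \<and> 0 \<le> vl + al * \<tau>"
    and "xf + L \<le> xl" "follow_safe b B L r xf vf af xl vl"
  shows "xf + vf * d + af * d\<^sup>2 / 2 + L \<le> xl + vl * d + al * d\<^sup>2 / 2"
proof -
  have "0 \<le> vf" "0 \<le> vl"
    using speeds[rule_format, of 0] assms(4) by auto
  have closing: "0 \<le> (xl - xf - L) + (vl - vf) * \<tau> + (al - af) * \<tau>\<^sup>2 / 2"
    if "0 \<le> \<tau>" "\<tau> \<le> d" "(vl - vf) + (al - af) * \<tau> \<le> 0" for \<tau>
  proof -
    have "0 \<le> vf + af * \<tau>" "0 \<le> vl + al * \<tau>"
      using speeds that(1,2) by auto
    with follow_safe_flow assms(1-3,8) that(1) \<open>0 \<le> vf\<close> \<open>0 \<le> vl\<close>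
    have "follow_safe b B L (r - \<tau>) (xf + vf * \<tau> + af * \<tau>\<^sup>2 / 2) (vf + af * \<tau>) af
        (xl + vl * \<tau> + al * \<tau>\<^sup>2 / 2) (vl + al * \<tau>)"
      by force
    moreover have "0 \<le> r - \<tau>"
      using assms(5) that(2) by linarith
    ultimately have "stop_pos b (xf + vf * \<tau> + af * \<tau>\<^sup>2 / 2) (vf + af * \<tau>) + L
        < stop_pos B (xl + vl * \<tau> + al * \<tau>\<^sup>2 / 2) (vl + al * \<tau>)"
      using follow_safe_stop_pos assms(2) \<open>0 \<le> vf + af * \<tau>\<close> by blast
    moreover have "vl + al * \<tau> \<le> vf + af * \<tau>"
      using that(3) by (simp add: algebra_simps)
    ultimately have "xf + vf * \<tau> + af * \<tau>\<^sup>2 / 2 + L < xl + vl * \<tau> + al * \<tau>\<^sup>2 / 2"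
      using pos_less_if_stop_pos_less assms(1,2) \<open>0 \<le> vl + al * \<tau>\<close> by blast
    then show ?thesis
      by (simp add: field_simps)
  qed
  have "0 \<le> xl - xf - L"
    using assms(7) by simp
  from quadratic_nonneg_at_end[OF assms(4) this closing]
  have "0 \<le> (xl - xf - L) + (vl - vf) * d + (al - af) * d\<^sup>2 / 2" .
  then show ?thesis
    by (simp add: field_simps)
qed

section \<open>Solutions of the plant\<close>

lemma eq_if_same_derivative_on_interval:
  fixes F G :: "real \<Rightarrow> real"
  assumes "\<forall>\<tau>\<in>{0..r}. (F has_real_derivative f \<tau>) (at \<tau> within {0..r})"
    and "\<forall>\<tau>\<in>{0..r}. (G has_real_derivative f \<tau>) (at \<tau> within {0..r})"
    and "F 0 = G 0" "x \<in> {0..r}"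
  shows "F x = G x"
proof -
  have "((\<lambda>y. F y - G y) has_real_derivative 0) (at y within {0..r})" if "y \<in> {0..r}" for y
    using DERIV_diff[of F "f y" y "{0..r}" G "f y"] assms(1,2) that by simp
  then have "\<exists>c. \<forall>y\<in>{0..r}. F y - G y = c"
    by (intro has_field_derivative_zero_constant) auto
  then obtain c where c: "\<forall>y\<in>{0..r}. F y - G y = c" ..
  have "0 \<in> {0..r}"
    using assms(4) by auto
  with c[rule_format, of 0] c[rule_format, OF assms(4)] assms(3) show ?thesis
    by simp
qed

lemma plant_solution:
  assumes "plant p s s'"
  obtains d where "0 \<le> d"
    and "\<forall>\<tau>\<in>{0..d}. 0 \<le> ve s + ae s * \<tau> \<and> ve s + ae s * \<tau> \<le> cV p
      \<and> 0 \<le> vo s + ao s * \<tau> \<and> vo s + ao s * \<tau> \<le> cV p"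
    and "t s + d \<le> tc s + cT p"
    and "s' = s\<lparr>xe := xe s + ve s * d + ae s * d\<^sup>2 / 2, ve := ve s + ae s * d,
      xo := xo s + vo s * d + ao s * d\<^sup>2 / 2, vo := vo s + ao s * d, t := t s + d\<rparr>"
proof -
  obtain r X VE XO VO TM where "0 \<le> r"
    and init: "X 0 = xe s" "VE 0 = ve s" "XO 0 = xo s" "VO 0 = vo s" "TM 0 = t s"
    and ode: "\<forall>\<tau>\<in>{0..r}.
       (X has_real_derivative VE \<tau>) (at \<tau> within {0..r}) \<and>
       (VE has_real_derivative ae s) (at \<tau> within {0..r}) \<and>
       (XO has_real_derivative VO \<tau>) (at \<tau> within {0..r}) \<and>
       (VO has_real_derivative ao s) (at \<tau> within {0..r}) \<and>
       (TM has_real_derivative 1) (at \<tau> within {0..r}) \<and>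
       TM \<tau> \<le> tc s + cT p \<and> 0 \<le> VE \<tau> \<and> VE \<tau> \<le> cV p \<and> 0 \<le> VO \<tau> \<and> VO \<tau> \<le> cV p"
    and s': "s' = s\<lparr>xe := X r, ve := VE r, xo := XO r, vo := VO r, t := TM r\<rparr>"
    using assms unfolding plant_def by blast
  have linear: "\<forall>\<tau>\<in>{0..r}. ((\<lambda>x. a + b * x) has_real_derivative b) (at \<tau> within {0..r})" for a b
    by (auto intro!: derivative_eq_intros)
  have VE: "VE x = ve s + ae s * x" if "x \<in> {0..r}" for x
    using eq_if_same_derivative_on_interval[OF _ linear[of "ve s" "ae s"] _ that] ode init by auto
  have VO: "VO x = vo s + ao s * x" if "x \<in> {0..r}" for x
    using eq_if_same_derivative_on_interval[OF _ linear[of "vo s" "ao s"] _ that] ode init by auto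
  have TM: "TM x = t s + x" if "x \<in> {0..r}" for x
    using eq_if_same_derivative_on_interval[OF _ linear[of "t s" 1] _ that] ode init by auto
  have X: "X x = xe s + ve s * x + ae s * x\<^sup>2 / 2" if "x \<in> {0..r}" for x
  proof (rule eq_if_same_derivative_on_interval[where f = VE, OF _ _ _ that])
    show "\<forall>\<tau>\<in>{0..r}. ((\<lambda>x. xe s + ve s * x + ae s * x\<^sup>2 / 2) has_real_derivative VE \<tau>)
        (at \<tau> within {0..r})"
      using VE by (auto intro!: derivative_eq_intros)
  qed (use ode init in auto)
  have XO: "XO x = xo s + vo s * x + ao s * x\<^sup>2 / 2" if "x \<in> {0..r}" for x
  proof (rule eq_if_same_derivative_on_interval[where f = VO, OF _ _ _ that])
    show "\<forall>\<tau>\<in>{0..r}. ((\<lambda>x. xo s + vo s * x + ao s * x\<^sup>2 / 2) has_real_derivative VO \<tau>)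
        (at \<tau> within {0..r})"
      using VO by (auto intro!: derivative_eq_intros)
  qed (use ode init in auto)
  show ?thesis
  proof (rule that[of r])
    show "\<forall>\<tau>\<in>{0..r}. 0 \<le> ve s + ae s * \<tau> \<and> ve s + ae s * \<tau> \<le> cV p
        \<and> 0 \<le> vo s + ao s * \<tau> \<and> vo s + ao s * \<tau> \<le> cV p"
      using ode VE VO by auto
    show "t s + r \<le> tc s + cT p"
      using ode TM \<open>0 \<le> r\<close> by fastforce
  qed (use s' X XO VE VO TM \<open>0 \<le> r\<close> in auto)
qed

section \<open>The invariant of the back case\<close>

lemmas hp_defs = Test_def Seq_def relcompp_apply Choice_def IfP_def IfElse_def Asg_def Rnd_def

lemma ex_image_conj: "(\<exists>b. (\<exists>r. b = f r) \<and> P b) \<longleftrightarrow> (\<exists>r. P (f r))"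
  by blast

lemma ctrl_T_iff:
  "ctrl_T p s s' \<longleftrightarrow> (\<exists>a. cBmax p \<le> a \<and> a \<le> cAmax p \<and>
    (let s\<^sub>1 = s\<lparr>ae := a, tc := t s\<rparr> in
     if safeBack p s\<^sub>1 \<or> safeFront p s\<^sub>1 then s' = s\<^sub>1
     else \<exists>a'. s' = s\<^sub>1\<lparr>ae := a'\<rparr> \<and>
       (if xe s \<le> xo s then cBmax p \<le> a' \<and> a' \<le> cBmin p else cAmin p \<le> a' \<and> a' \<le> cAmax p)))"
  by (simp add: ctrl_T_def hp_defs ex_image_conj Let_def) blast

lemma De_eq_stop_pos: "De a s = stop_pos a (xe s) (ve s)"
  by (simp add: De_def stop_pos_def)

lemma Do_eq_stop_pos: "Do p s = stop_pos (cBmax p) (xo s) (vo s)"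
  by (simp add: Do_def stop_pos_def)

text \<open>Here tc + T - t is the time left until the next control decision is due.\<close>

definition safe_inv :: "prm \<Rightarrow> st \<Rightarrow> bool" where
  "safe_inv p s \<longleftrightarrow> Ctx p s \<and> xe s + cL p \<le> xo s \<and> t s \<le> tc s + cT p \<and>
    follow_safe (cBmin p) (cBmax p) (cL p) (tc s + cT p - t s) (xe s) (ve s) (ae s) (xo s) (vo s)"

lemma safe_inv_stop_pos:
  assumes "safe_inv p s"
  shows "stop_pos (cBmin p) (xe s) (ve s) + cL p < stop_pos (cBmax p) (xo s) (vo s)"
proof (rule follow_safe_stop_pos)
  show "follow_safe (cBmin p) (cBmax p) (cL p) (tc s + cT p - t s) (xe s) (ve s) (ae s) (xo s) (vo s)"
    using assms by (simp add: safe_inv_def)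
qed (use assms in \<open>auto simp: safe_inv_def Ctx_def\<close>)

lemma follow_safe_if_safeBack:
  assumes "Ctx p s" "safeBack p s"
  shows "follow_safe (cBmin p) (cBmax p) (cL p) (cT p) (xe s) (ve s) (ae s) (xo s) (vo s)"
proof -
  have "stop_pos (cBmin p) (xe s + ve s * cT p + ae s * (cT p)\<^sup>2 / 2) (ve s + ae s * cT p)
      = De (cBmin p) s + (- ae s / cBmin p + 1) * (ae s / 2 * (cT p)\<^sup>2 + cT p * ve s)"
    using assms(1) stop_pos_flow[of "cBmin p" "xe s" "ve s" "cT p" "ae s"]
    by (simp add: Ctx_def De_eq_stop_pos algebra_simps)
  with assms(2) show ?thesis
    by (auto simp: safeBack_def follow_safe_def De_eq_stop_pos Do_eq_stop_pos algebra_simps)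
qed

lemma safe_inv_ctrl_o:
  assumes "safe_inv p s" "ctrl_o p s s'"
  shows "safe_inv p s'"
proof -
  from assms(2) obtain a where "s' = s\<lparr>ao := a\<rparr>" "cBmax p \<le> a" "a \<le> cAmax p"
    by (auto simp: ctrl_o_def hp_defs)
  with assms(1) show ?thesis
    by (simp add: safe_inv_def Ctx_def)
qed

lemma safe_inv_ctrl_T:
  assumes inv: "safe_inv p s" and ctrl: "ctrl_T p s s'"
  shows "safe_inv p s'"
proof -
  from inv have ctx: "Ctx p s" and behind: "xe s + cL p \<le> xo s"
    by (auto simp: safe_inv_def)
  note stop = safe_inv_stop_pos[OF inv]
  from ctrl have same: "xe s' = xe s" "ve s' = ve s" "xo s' = xo s" "vo s' = vo s" "ao s' = ao s"
      "t s' = t s" "tc s' = t s"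
    and choice: "safeBack p s' \<or> safeFront p s' \<or> ae s' \<le> cBmin p \<or> \<not> xe s \<le> xo s"
    by (auto simp: ctrl_T_def hp_defs)
  from ctrl ctx have "cBmax p \<le> ae s'" "ae s' \<le> cAmax p"
    by (auto simp: ctrl_T_def hp_defs Ctx_def)
  with ctx same have ctx': "Ctx p s'"
    by (simp add: Ctx_def)
  from choice consider (safe) "safeBack p s'" | (front) "safeFront p s'"
    | (brake) "ae s' \<le> cBmin p" | (ahead) "\<not> xe s \<le> xo s"
    by blast
  then have "follow_safe (cBmin p) (cBmax p) (cL p) (cT p) (xe s') (ve s') (ae s') (xo s') (vo s')"
  proof cases
    case safe
    with ctx' show ?thesis
      by (rule follow_safe_if_safeBack)
  next
    case front
    with behind ctx same show ?thesis
      by (simp add: safeFront_def Ctx_def)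
  next
    case brake
    with stop same show ?thesis
      by (simp add: follow_safe_def)
  next
    case ahead
    with behind ctx show ?thesis
      by (simp add: Ctx_def)
  qed
  with ctx' behind same show ?thesis
    by (simp add: safe_inv_def Ctx_def)
qed

lemma safe_inv_accCor:
  assumes inv: "safe_inv p s" and cor: "accCor p s s'"
  shows "safe_inv p s'"
proof -
  from cor have same: "xe s' = xe s" "ve s' = ve s" "xo s' = xo s" "vo s' = vo s" "t s' = t s" "tc s' = tc s"
    and ao: "ao s' = ao s \<or> ao s' = 0"
    and ae: "ae s' = ae s \<or> (ae s' = 0 \<and> (ve s = 0 \<or> 0 \<le> ae s))"
    by (auto simp: accCor_def hp_defs)
  from inv have "Ctx p s'"
    using same ao ae by (auto simp: safe_inv_def Ctx_def)
  moreover have "follow_safe (cBmin p) (cBmax p) (cL p) (tc s + cT p - t s) (xe s) (ve s) (ae s') (xo s) (vo s)"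
  proof (cases "ae s' = ae s")
    case True
    with inv show ?thesis
      by (simp add: safe_inv_def)
  next
    case False
    with ae have "ae s' = 0" "ve s = 0 \<or> 0 \<le> ae s"
      by auto
    moreover from inv have "cBmin p < 0" "0 \<le> tc s + cT p - t s" "0 \<le> ve s"
      and "follow_safe (cBmin p) (cBmax p) (cL p) (tc s + cT p - t s) (xe s) (ve s) (ae s) (xo s) (vo s)"
      by (auto simp: safe_inv_def Ctx_def)
    ultimately show ?thesis
      using follow_safe_zero_acc by metis
  qed
  ultimately show ?thesis
    using inv same by (simp add: safe_inv_def)
qed

lemma safe_inv_plant:
  assumes inv: "safe_inv p s" and flow: "plant p s s'"
  shows "safe_inv p s'"
proof -
  obtain d where "0 \<le> d"
    and speeds: "\<forall>\<tau>\<in>{0..d}. 0 \<le> ve s + ae s * \<tau> \<and> ve s + ae s * \<tau> \<le> cV p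
      \<and> 0 \<le> vo s + ao s * \<tau> \<and> vo s + ao s * \<tau> \<le> cV p"
    and "t s + d \<le> tc s + cT p"
    and s': "s' = s\<lparr>xe := xe s + ve s * d + ae s * d\<^sup>2 / 2, ve := ve s + ae s * d,
      xo := xo s + vo s * d + ao s * d\<^sup>2 / 2, vo := vo s + ao s * d, t := t s + d\<rparr>"
    using plant_solution[OF flow] by blast
  from inv have ctx: "Ctx p s" and behind: "xe s + cL p \<le> xo s"
    and safe: "follow_safe (cBmin p) (cBmax p) (cL p) (tc s + cT p - t s) (xe s) (ve s) (ae s) (xo s) (vo s)"
    by (auto simp: safe_inv_def)
  have brakes: "cBmax p \<le> cBmin p" "cBmin p < 0" "cBmax p < 0" "cBmax p \<le> ao s"
    using ctx by (auto simp: Ctx_def)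
  have "d \<le> tc s + cT p - t s"
    using \<open>t s + d \<le> tc s + cT p\<close> by simp
  from follow_safe_keeps_gap[OF brakes(1,2,4) \<open>0 \<le> d\<close> this _ behind safe] speeds
  have "xe s' + cL p \<le> xo s'"
    using s' by simp
  moreover have "follow_safe (cBmin p) (cBmax p) (cL p) (tc s' + cT p - t s') (xe s') (ve s') (ae s') (xo s') (vo s')"
    using follow_safe_flow[OF brakes(2-4) \<open>0 \<le> d\<close> _ _ _ _ safe] speeds ctx \<open>0 \<le> d\<close> s'
    by (auto simp: Ctx_def algebra_simps)
  ultimately show ?thesis
    using ctx speeds \<open>0 \<le> d\<close> \<open>t s + d \<le> tc s + cT p\<close> s' by (auto simp: safe_inv_def Ctx_def)
qed

definition model_step :: "prm \<Rightarrow> prog" where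
  "model_step p = Seq (ctrl_o p) (Seq (Choice (ctrl_T p) (Test (\<lambda>s. t s < tc s + cT p))) (Seq (accCor p) (plant p)))"

lemma model_eq_star_step: "model p = (model_step p)\<^sup>*\<^sup>*"
  by (simp add: model_def model_step_def Star_def)

lemma safe_inv_model_step:
  assumes "safe_inv p s" "model_step p s s'"
  shows "safe_inv p s'"
proof -
  from assms(2) obtain s\<^sub>1 s\<^sub>2 s\<^sub>3 where "ctrl_o p s s\<^sub>1" "ctrl_T p s\<^sub>1 s\<^sub>2 \<or> s\<^sub>2 = s\<^sub>1"
    and "accCor p s\<^sub>2 s\<^sub>3" "plant p s\<^sub>3 s'"
    by (auto simp: model_step_def hp_defs)
  with assms(1) show ?thesis
    by (metis safe_inv_ctrl_o safe_inv_ctrl_T safe_inv_accCor safe_inv_plant)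
qed

lemma safe_inv_model:
  assumes "model p s s'" "safe_inv p s"
  shows "safe_inv p s'"
  using assms unfolding model_eq_star_step
  by (induction rule: rtranclp_induct) (auto intro: safe_inv_model_step)

lemma safe_inv_init:
  assumes "Ctx p s" "xe s + cL p \<le> xo s" "De (cBmin p) s + cL p < Do p s" "tc s = t s - cT p"
  shows "safe_inv p s"
  using assms by (auto simp: safe_inv_def follow_safe_def Ctx_def De_eq_stop_pos Do_eq_stop_pos)

section \<open>Reduction of the front case to the back case\<close>

text \<open>Positions and velocities relative to a reference car at full speed V, with the road
  reversed.\<close>

definition mirror_prm :: "prm \<Rightarrow> prm" where
  "mirror_prm p = p\<lparr>cAmin := - cBmin p, cAmax := - cBmax p, cBmin := - cAmin p, cBmax := - cAmax p\<rparr>"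

definition mirror :: "prm \<Rightarrow> st \<Rightarrow> st" where
  "mirror p s = s\<lparr>xe := cV p * t s - xe s, ve := cV p - ve s, ae := - ae s,
    xo := cV p * t s - xo s, vo := cV p - vo s, ao := - ao s\<rparr>"

lemma mirror_prm_simps [simp]:
  "cT (mirror_prm p) = cT p" "cL (mirror_prm p) = cL p" "cV (mirror_prm p) = cV p"
  "cAmin (mirror_prm p) = - cBmin p" "cAmax (mirror_prm p) = - cBmax p"
  "cBmin (mirror_prm p) = - cAmin p" "cBmax (mirror_prm p) = - cAmax p"
  by (simp_all add: mirror_prm_def)

lemma mirror_simps [simp]:
  "xe (mirror p s) = cV p * t s - xe s" "ve (mirror p s) = cV p - ve s" "ae (mirror p s) = - ae s"
  "xo (mirror p s) = cV p * t s - xo s" "vo (mirror p s) = cV p - vo s" "ao (mirror p s) = - ao s"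
  "t (mirror p s) = t s" "tc (mirror p s) = tc s"
  by (simp_all add: mirror_def)

lemma mirror_prm_mirror_prm [simp]: "mirror_prm (mirror_prm p) = p"
  by (simp add: mirror_prm_def)

lemma mirror_mirror [simp]: "mirror (mirror_prm p) (mirror p s) = s"
  by (simp add: mirror_def mirror_prm_def)

lemma Ctx_mirror [simp]: "Ctx (mirror_prm p) (mirror p s) = Ctx p s"
  by (auto simp: Ctx_def)

lemma hDe_mirror: "hDe (mirror_prm p) a (mirror p s) = - De (- a) s"
  by (simp add: hDe_def hxe_def hve_def De_def)

lemma hDo_mirror: "hDo (mirror_prm p) (mirror p s) = - Do p s"
  by (simp add: hDo_def hxo_def hvo_def Do_def)

lemma De_mirror: "De (- a) (mirror p s) = - hDe p a s"
  using hDe_mirror[of "mirror_prm p" a "mirror p s"] by simp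

lemma Do_mirror: "Do (mirror_prm p) (mirror p s) = - hDo p s"
  using hDo_mirror[of "mirror_prm p" "mirror p s"] by simp

lemma safeFront_mirror: "safeFront (mirror_prm p) (mirror p s) = safeBack p s"
proof -
  let ?p = "mirror_prm p" and ?s = "mirror p s"
  have "(- ae ?s / cAmin ?p + 1) * (ae ?s / 2 * (cT ?p)\<^sup>2 + hve ?p ?s * cT ?p)
      = - ((- ae s / cBmin p + 1) * (ae s / 2 * (cT p)\<^sup>2 + cT p * ve s))"
    by (simp add: hve_def algebra_simps)
  then show ?thesis
    unfolding safeFront_def safeBack_def hDe_mirror hDo_mirror by (auto simp: hve_def)
qed

lemma safeBack_mirror: "safeBack (mirror_prm p) (mirror p s) = safeFront p s"
  using safeFront_mirror[of "mirror_prm p" "mirror p s"] by simp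

text \<open>Oriented to move updates under mirror, where the safety predicates can be mirrored.\<close>

lemma mirror_update [simp]:
  "(mirror p s)\<lparr>ae := a\<rparr> = mirror p (s\<lparr>ae := - a\<rparr>)"
  "(mirror p s)\<lparr>ao := a\<rparr> = mirror p (s\<lparr>ao := - a\<rparr>)"
  "(mirror p s)\<lparr>tc := c\<rparr> = mirror p (s\<lparr>tc := c\<rparr>)"
  by (simp_all add: mirror_def)

lemma ctrl_o_mirror:
  assumes "ctrl_o p s s'"
  shows "ctrl_o (mirror_prm p) (mirror p s) (mirror p s')"
proof -
  from assms obtain a where "s' = s\<lparr>ao := a\<rparr>" "cBmax p \<le> a" "a \<le> cAmax p"
    by (auto simp: ctrl_o_def hp_defs)
  then show ?thesis
    by (auto simp: ctrl_o_def hp_defs intro!: exI[of _ "- a"])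
qed

lemma accCor_mirror:
  assumes "accCor p s s'"
  shows "accCor (mirror_prm p) (mirror p s) (mirror p s')"
  using assms by (auto simp: accCor_def hp_defs)

text \<open>At xe = xo both controllers take the braking branch, so this tie must be excluded.\<close>

lemma ctrl_T_mirror:
  assumes "xe s \<noteq> xo s" "ctrl_T p s s'"
  shows "ctrl_T (mirror_prm p) (mirror p s) (mirror p s')"
proof -
  from assms(2) obtain a where a: "cBmax p \<le> a" "a \<le> cAmax p"
    and step: "let s\<^sub>1 = s\<lparr>ae := a, tc := t s\<rparr> in
     if safeBack p s\<^sub>1 \<or> safeFront p s\<^sub>1 then s' = s\<^sub>1
     else \<exists>a'. s' = s\<^sub>1\<lparr>ae := a'\<rparr> \<and>
       (if xe s \<le> xo s then cBmax p \<le> a' \<and> a' \<le> cBmin p else cAmin p \<le> a' \<and> a' \<le> cAmax p)"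
    unfolding ctrl_T_iff by blast
  define s\<^sub>1 where "s\<^sub>1 = s\<lparr>ae := a, tc := t s\<rparr>"
  have "(mirror p s)\<lparr>ae := - a, tc := t (mirror p s)\<rparr> = mirror p s\<^sub>1"
    by (simp add: s\<^sub>1_def)
  moreover have "safeBack (mirror_prm p) (mirror p s\<^sub>1) \<or> safeFront (mirror_prm p) (mirror p s\<^sub>1)
      \<longleftrightarrow> safeBack p s\<^sub>1 \<or> safeFront p s\<^sub>1"
    by (auto simp: safeBack_mirror safeFront_mirror)
  moreover have "xe (mirror p s) \<le> xo (mirror p s) \<longleftrightarrow> \<not> xe s \<le> xo s"
    using assms(1) by auto
  moreover have "\<exists>a'. mirror p s' = (mirror p s\<^sub>1)\<lparr>ae := a'\<rparr> \<and>
       (if \<not> xe s \<le> xo s then - cAmax p \<le> a' \<and> a' \<le> - cAmin p else - cBmin p \<le> a' \<and> a' \<le> - cBmax p)"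
    if "\<not> (safeBack p s\<^sub>1 \<or> safeFront p s\<^sub>1)"
  proof -
    from step that obtain a' where "s' = s\<^sub>1\<lparr>ae := a'\<rparr>"
      and "if xe s \<le> xo s then cBmax p \<le> a' \<and> a' \<le> cBmin p else cAmin p \<le> a' \<and> a' \<le> cAmax p"
      by (auto simp: s\<^sub>1_def)
    then show ?thesis
      by (intro exI[of _ "- a'"]) auto
  qed
  ultimately show ?thesis
    using a step unfolding ctrl_T_iff Let_def s\<^sub>1_def[symmetric]
    by (intro exI[of _ "- a"]) auto
qed

lemma plant_mirror:
  assumes "plant p s s'"
  shows "plant (mirror_prm p) (mirror p s) (mirror p s')"
  using assms unfolding plant_def
  apply (elim exE conjE)
  subgoal for r X VE XO VO TM
    apply (rule exI[of _ r], rule conjI, assumption)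
    apply (rule exI[of _ "\<lambda>\<tau>. cV p * TM \<tau> - X \<tau>"], rule exI[of _ "\<lambda>\<tau>. cV p - VE \<tau>"],
        rule exI[of _ "\<lambda>\<tau>. cV p * TM \<tau> - XO \<tau>"], rule exI[of _ "\<lambda>\<tau>. cV p - VO \<tau>"], rule exI[of _ TM])
    apply (auto simp: mirror_def intro!: derivative_eq_intros)
    done
  done

lemma model_step_mirror:
  assumes "xe s \<noteq> xo s" "model_step p s s'"
  shows "model_step (mirror_prm p) (mirror p s) (mirror p s')"
proof -
  from assms(2) obtain s\<^sub>1 s\<^sub>2 s\<^sub>3 where "ctrl_o p s s\<^sub>1"
    and "ctrl_T p s\<^sub>1 s\<^sub>2 \<or> s\<^sub>2 = s\<^sub>1 \<and> t s\<^sub>1 < tc s\<^sub>1 + cT p"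
    and "accCor p s\<^sub>2 s\<^sub>3" "plant p s\<^sub>3 s'"
    by (auto simp: model_step_def hp_defs)
  moreover from \<open>ctrl_o p s s\<^sub>1\<close> assms(1) have "xe s\<^sub>1 \<noteq> xo s\<^sub>1"
    by (auto simp: ctrl_o_def hp_defs)
  ultimately have "ctrl_o (mirror_prm p) (mirror p s) (mirror p s\<^sub>1)"
    and "ctrl_T (mirror_prm p) (mirror p s\<^sub>1) (mirror p s\<^sub>2)
      \<or> mirror p s\<^sub>2 = mirror p s\<^sub>1 \<and> t (mirror p s\<^sub>1) < tc (mirror p s\<^sub>1) + cT (mirror_prm p)"
    and "accCor (mirror_prm p) (mirror p s\<^sub>2) (mirror p s\<^sub>3)"
    and "plant (mirror_prm p) (mirror p s\<^sub>3) (mirror p s')"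
    using ctrl_o_mirror ctrl_T_mirror accCor_mirror plant_mirror by auto
  then show ?thesis
    unfolding model_step_def hp_defs by blast
qed

lemma safe_inv_mirror_model:
  assumes "model p s s'" "safe_inv (mirror_prm p) (mirror p s)"
  shows "safe_inv (mirror_prm p) (mirror p s')"
  using assms unfolding model_eq_star_step
proof (induction rule: rtranclp_induct)
  case (step s\<^sub>1 s\<^sub>2)
  then have "xe s\<^sub>1 \<noteq> xo s\<^sub>1"
    by (auto simp: safe_inv_def Ctx_def)
  with step show ?case
    by (blast intro: safe_inv_model_step model_step_mirror)
qed

theorem theorem1:
  shows "(\<forall>p s. Ctx p s \<and> xe s + cL p \<le> xo s \<and> De (cBmin p) s + cL p < Do p s
                \<and> tc s = t s - cT p
           \<longrightarrow> Box (model p) (\<lambda>s'. xe s' + cL p \<le> xo s') s)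
       \<and> (\<forall>p s. Ctx p s \<and> xo s + cL p \<le> xe s \<and> hDo p s + cL p < hDe p (cAmin p) s
                \<and> tc s = t s - cT p
           \<longrightarrow> Box (model p) (\<lambda>s'. xo s' + cL p \<le> xe s') s)"
proof (intro conjI allI impI)
  fix p s
  assume "Ctx p s \<and> xe s + cL p \<le> xo s \<and> De (cBmin p) s + cL p < Do p s \<and> tc s = t s - cT p"
  then have "safe_inv p s"
    by (intro safe_inv_init) auto
  then show "Box (model p) (\<lambda>s'. xe s' + cL p \<le> xo s') s"
    by (auto simp: Box_def safe_inv_def dest: safe_inv_model)
next
  fix p s
  assume "Ctx p s \<and> xo s + cL p \<le> xe s \<and> hDo p s + cL p < hDe p (cAmin p) s \<and> tc s = t s - cT p"
  then have "safe_inv (mirror_prm p) (mirror p s)"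
    by (intro safe_inv_init) (auto simp: De_mirror Do_mirror)
  then show "Box (model p) (\<lambda>s'. xo s' + cL p \<le> xe s') s"
    by (auto simp: Box_def safe_inv_def dest: safe_inv_mirror_model)
qed

end
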